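(* There is a unique $w\in\mathbb{R}^n$ with $w_j>0$ for all $j$, lying in the row span of $A$, such that $\sum_{j=1}^nA_{lj}/w_j=b_l$ for $l=1,\dots,m$ (i.e. $(1/w_j)_j\in K_n$). Moreover, $P_{n,w}$ for this $w$ has maximal entropy among all probability distributions on $\mathbb{R}^n_{\ge0}$ whose mean vector exists and lies in $K_n$. Furthermore $w=A^t\Lambda_0$, where $\Lambda_0$ is the unique minimizer over $\mathbb{R}^m$ of the convex function $$H_n(\Lambda):=\log\int_{\mathbb{R}^n_{\ge0}}e^{-\Lambda^tAx}dx+\langle\Lambda,b\rangle=-\sum_{j=1}^n\log\big((A^t\Lambda)_j\big)+\langle\Lambda,b\rangle,$$ with the convention $\log\tau=-\infty$ for $\tau\le0$ (so $H_n$ may be $+\infty$).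
   Context: Fix $n>m\ge1$. $A$ is a real $m\times n$ matrix of rank $m$ and $b\in\mathbb{R}^m$ such that $K_n:=\{x\in\mathbb{R}^n: x\ge0,\ Ax=b\}$ is compact and contains a point with all coordinates strictly positive. For $w$ with all $w_j>0$, $P_{n,w}$ is the probability measure on $\mathbb{R}^n$ with density $(\prod_jw_j)e^{-\sum_jw_jx_j}\mathbf 1_{x\ge0}$. The entropy of an absolutely continuous probability measure with density $f$ is $-\int f\log f$ if $f\log f$ is integrable and $-\infty$ otherwise. *)

theory Defs
  imports "HOL-Analysis.Analysis" "HOL-Probability.Probability"
begin

definition orthant :: "(real^'n) set" where
  "orthant = {x. \<forall>j. 0 \<le> x $ j}"

definition Kset :: "real^'n^'m \<Rightarrow> real^'m \<Rightarrow> (real^'n) set" where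
  "Kset A b = {x. (\<forall>j. 0 \<le> x $ j) \<and> A *v x = b}"

definition exp_density :: "real^'n \<Rightarrow> real^'n \<Rightarrow> real" where
  "exp_density w x = (\<Prod>j\<in>UNIV. w $ j) * exp (- (\<Sum>j\<in>UNIV. w $ j * x $ j)) * indicator orthant x"

definition orthant_prob_density :: "(real^'n \<Rightarrow> real) \<Rightarrow> bool" where
  "orthant_prob_density f \<longleftrightarrow> f \<in> borel_measurable lborel \<and>
     (AE x in lborel. 0 \<le> f x) \<and> (AE x in lborel. x \<notin> orthant \<longrightarrow> f x = 0) \<and>
     integrable lborel f \<and> integral\<^sup>L lborel f = 1"

definition mean_exists :: "(real^'n \<Rightarrow> real) \<Rightarrow> bool" where
  "mean_exists f \<longleftrightarrow> (\<forall>j. integrable lborel (\<lambda>x. f x * x $ j))"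

definition mean_vec :: "(real^'n \<Rightarrow> real) \<Rightarrow> real^'n" where
  "mean_vec f = (\<chi> j. integral\<^sup>L lborel (\<lambda>x. f x * x $ j))"

definition dens_entropy :: "(real^'n \<Rightarrow> real) \<Rightarrow> ereal" where
  "dens_entropy f = (if integrable lborel (\<lambda>x. f x * ln (f x))
      then ereal (- integral\<^sup>L lborel (\<lambda>x. f x * ln (f x))) else -\<infinity>)"

definition Hn :: "real^'n^'m \<Rightarrow> real^'m \<Rightarrow> real^'m \<Rightarrow> ereal" where
  "Hn A b \<Lambda> = (if \<forall>j. 0 < (transpose A *v \<Lambda>) $ j
      then ereal (- (\<Sum>j\<in>UNIV. ln ((transpose A *v \<Lambda>) $ j)) + \<Lambda> \<bullet> b)
      else \<infinity>)"

end

theory Submission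
  imports Defs
begin

text \<open>
  Write \<open>y = A\<^sup>T\<Lambda>\<close>. For a strictly positive \<open>x \<in> K\<^sub>n\<close> we have \<open>\<langle>\<Lambda>, b\<rangle> = \<langle>y, x\<rangle>\<close>, so \<open>H\<^sub>n(\<Lambda>)\<close> is
  the log-barrier \<open>\<Sum>\<^sub>j y\<^sub>j x\<^sub>j - ln y\<^sub>j\<close> restricted to the row space of \<open>A\<close>. Boundedness of
  \<open>K\<^sub>n\<close> gives (Gordan) some positive \<open>y\<close> in the row space, and the barrier is coercive on the
  positive orthant, so it attains its minimum there; stationarity says that \<open>x - 1/y\<close> is
  orthogonal to the row space, i.e. \<open>A(1/y) = b\<close>. This \<open>w = y\<close> is unique because
  \<open>\<langle>1/w - 1/w', w - w'\<rangle> < 0\<close> unless \<open>w = w'\<close>, and \<open>y/w - ln y \<ge> 1 - ln w\<close> shows that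
  \<open>A\<^sup>T\<Lambda>\<^sub>0 = w\<close> is the unique minimiser of \<open>H\<^sub>n\<close>.

  \<open>P\<^bsub>n,w\<^esub>\<close> is a product of exponential laws with mean \<open>1/w \<in> K\<^sub>n\<close>. For any density \<open>f\<close> with
  mean \<open>\<mu>\<close>, Gibbs' inequality gives \<open>-\<integral> f ln f \<le> \<langle>w, \<mu>\<rangle> - \<Sum>\<^sub>j ln w\<^sub>j\<close>, with equality for
  \<open>f = P\<^bsub>n,w\<^esub>\<close>; since \<open>w\<close> lies in the row space, \<open>\<langle>w, \<mu>\<rangle>\<close> is the same for every \<open>\<mu> \<in> K\<^sub>n\<close>.
\<close>

definition vec_recip :: "real^'n \<Rightarrow> real^'n" where
  "vec_recip w = (\<chi> j. 1 / w $ j)"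

lemma sum_divide_eq_iff_vec_recip:
  "(\<forall>l. (\<Sum>j\<in>UNIV. A $ l $ j / w $ j) = b $ l) \<longleftrightarrow> A *v vec_recip w = b"
  by (simp add: vec_eq_iff matrix_vector_mult_def vec_recip_def divide_inverse)

lemma inner_vec_recip:
  fixes w :: "real^'n"
  assumes "\<forall>j. 0 < w $ j"
  shows "w \<bullet> vec_recip w = real CARD('n)"
proof -
  have "w $ j * vec_recip w $ j = 1" for j using assms[rule_format, of j] by (simp add: vec_recip_def)
  then show ?thesis by (simp add: inner_vec_def)
qed

lemma Basis_real_vec: "(Basis :: (real^'n) set) = range (\<lambda>j. axis j 1)"
  by (auto simp: Basis_vec_def)

lemma inner_matrix_vector_mult:
  fixes A :: "real^'n^'m"
  shows "L \<bullet> (A *v x) = (transpose A *v L) \<bullet> x"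
  by (metis dot_lmul_matrix transpose_transpose vector_transpose_matrix inner_commute)

lemma span_rows_eq_range:
  fixes A :: "real^'n^'m"
  shows "span (rows A) = range ((*v) (transpose A))"
proof -
  have "rows A = (*v) (transpose A) ` range (\<lambda>i. axis i 1)"
    by (metis columns_image_basis columns_transpose)
  then show ?thesis
    by (simp only: span_linear_image[OF matrix_vector_mul_linear] Basis_real_vec[symmetric] span_Basis)
qed

section \<open>A positive vector in the row space\<close>

lemma convex_positive_orthant: "convex {x :: real^'n. \<forall>j. 0 < x $ j}"
proof -
  have "{x :: real^'n. \<forall>j. 0 < x $ j} = (\<Inter>j. {x. axis j 1 \<bullet> x > 0})"
    by (auto simp: inner_axis')
  then show ?thesis by (simp add: convex_INT convex_halfspace_gt)
qed

lemma nonneg_if_inner_positive_nonneg: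
  fixes a :: "real^'n"
  assumes "\<And>p. \<forall>i. 0 < p $ i \<Longrightarrow> 0 \<le> a \<bullet> p"
  shows "0 \<le> a $ j"
proof -
  let ?p = "\<lambda>t::real. axis j 1 + t *\<^sub>R (\<chi> i. 1)"
  have "((\<lambda>t. a \<bullet> ?p t) \<longlongrightarrow> a \<bullet> ?p 0) (at_right 0)"
    by (intro tendsto_intros)
  moreover have "\<forall>\<^sub>F t in at_right 0. 0 \<le> a \<bullet> ?p t"
    using eventually_at_right_less by eventually_elim (auto intro!: assms simp: axis_def add_pos_nonneg)
  ultimately have "0 \<le> a \<bullet> ?p 0" by (rule tendsto_lowerbound) simp
  then show ?thesis by (simp add: inner_axis)
qed

lemma inner_eq_zero_if_bounded_on_subspace:
  assumes "subspace V" and "\<And>v. v \<in> V \<Longrightarrow> a \<bullet> v \<le> \<beta>" and "v \<in> V"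
  shows "a \<bullet> v = 0"
proof (rule ccontr)
  assume "a \<bullet> v \<noteq> 0"
  then have "a \<bullet> (((\<beta> + 1) / (a \<bullet> v)) *\<^sub>R v) = \<beta> + 1" by simp
  moreover have "((\<beta> + 1) / (a \<bullet> v)) *\<^sub>R v \<in> V" using assms by (simp add: subspace_scale)
  ultimately show False using assms(2) by fastforce
qed

text \<open>Gordan's alternative: otherwise a separating hyperplane yields \<open>a \<ge> 0\<close>, \<open>a \<noteq> 0\<close>
  with \<open>A a = 0\<close>, a recession direction of \<open>K\<^sub>n\<close>.\<close>
lemma exists_transpose_mult_positive:
  fixes A :: "real^'n^'m"
  assumes bdd: "bounded (Kset A b)" and x: "x \<in> Kset A b"
  shows "\<exists>L. \<forall>j. 0 < (transpose A *v L) $ j"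
proof (rule ccontr)
  assume no: "\<not> ?thesis"
  let ?V = "range ((*v) (transpose A))" and ?P = "{p :: real^'n. \<forall>i. 0 < p $ i}"
  have V: "subspace ?V" by (rule linear_subspace_image[OF matrix_vector_mul_linear subspace_UNIV])
  have "(\<chi> i. 1) \<in> ?P" by simp
  then obtain a \<beta> where "a \<noteq> 0" and aV: "\<forall>v\<in>?V. a \<bullet> v \<le> \<beta>" and aP: "\<forall>p\<in>?P. \<beta> \<le> a \<bullet> p"
    using separating_hyperplane_sets[OF subspace_imp_convex[OF V] convex_positive_orthant] no by blast
  have orth: "a \<bullet> (transpose A *v L) = 0" for L
    using inner_eq_zero_if_bounded_on_subspace[OF V] aV by blast
  have "0 \<le> \<beta>" using aV[rule_format, OF subspace_0[OF V]] by simp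
  then have a_nonneg: "0 \<le> a $ j" for j
    using aP by (intro nonneg_if_inner_positive_nonneg) force
  have "(A *v a) \<bullet> (A *v a) = (transpose A *v (A *v a)) \<bullet> a"
    by (rule inner_matrix_vector_mult)
  also have "\<dots> = 0" using orth by (simp add: inner_commute)
  finally have "(A *v a) \<bullet> (A *v a) = 0" .
  then have "A *v a = 0" by simp
  then have ray: "x + t *\<^sub>R a \<in> Kset A b" if "0 \<le> t" for t
    using x a_nonneg that by (simp add: Kset_def matrix_vector_right_distrib matrix_vector_mult_scaleR)
  obtain B where B: "\<And>y. y \<in> Kset A b \<Longrightarrow> norm y \<le> B"
    using bdd by (auto simp: bounded_iff)
  define t where "t = (B + norm x + 1) / norm a"
  have "0 \<le> B" using B[OF x] norm_ge_zero order_trans by blast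
  then have t: "0 \<le> t" "t * norm a = B + norm x + 1"
    using \<open>a \<noteq> 0\<close> by (auto simp: t_def)
  have "t * norm a \<le> norm (x + t *\<^sub>R a) + norm x"
    using norm_triangle_ineq4[of "x + t *\<^sub>R a" x] t by simp
  also have "\<dots> \<le> B + norm x" using B[OF ray[OF t(1)]] by simp
  finally show False using t by simp
qed

section \<open>Minimising the log-barrier\<close>

text \<open>For \<open>A x = b\<close> and \<open>c = A\<^sup>T\<Lambda> > 0\<close> this is \<open>H\<^sub>n(\<Lambda>)\<close>.\<close>
definition log_barrier :: "real^'n \<Rightarrow> real^'n \<Rightarrow> real" where
  "log_barrier x c = (\<Sum>j\<in>UNIV. c $ j * x $ j - ln (c $ j))"

lemma ln_term_lower_bound:
  fixes x y :: real
  assumes "0 < x" "0 < y"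
  shows "1 + ln x \<le> y * x - ln y"
  using ln_le_minus_one[of "y * x"] assms by (simp add: ln_mult)

lemma ln_term_sublevel_bounds:
  fixes x y s :: real
  assumes x: "0 < x" and y: "0 < y" and s: "y * x - ln y \<le> s"
  shows "exp (- s) \<le> y" and "y \<le> 2 * (s + ln (2 / x) - 1) / x"
proof -
  have "0 < y * x" using x y by simp
  then have "- ln y \<le> s" using s by linarith
  then have "exp (- s) \<le> exp (ln y)" by simp
  then show "exp (- s) \<le> y" using y by simp
  have "ln (y * x / 2) \<le> y * x / 2 - 1" using x y by (intro ln_le_minus_one) simp
  then have "y * x / 2 \<le> s + ln (2 / x) - 1" using s x y by (simp add: ln_div ln_mult)
  then show "y \<le> 2 * (s + ln (2 / x) - 1) / x" using x by (simp add: pos_le_divide_eq)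
qed

lemma log_barrier_sublevel_in_cbox:
  fixes x :: "real^'n"
  assumes x: "\<forall>j. 0 < x $ j"
  shows "\<exists>lo up. (\<forall>j. 0 < lo $ j) \<and>
    (\<forall>c. (\<forall>j. 0 < c $ j) \<and> log_barrier x c \<le> r \<longrightarrow> c \<in> cbox lo up)"
proof -
  define s where "s k = r - (\<Sum>j\<in>UNIV. 1 + ln (x $ j)) + (1 + ln (x $ k))" for k
  have term_le: "c $ k * x $ k - ln (c $ k) \<le> s k"
    if c: "\<forall>j. 0 < c $ j" and r: "log_barrier x c \<le> r" for c k
  proof -
    have "(c $ k * x $ k - ln (c $ k)) - (1 + ln (x $ k))
        \<le> (\<Sum>j\<in>UNIV. (c $ j * x $ j - ln (c $ j)) - (1 + ln (x $ j)))"
      using ln_term_lower_bound x c by (intro member_le_sum) auto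
    then show ?thesis using r by (simp add: s_def log_barrier_def sum_subtractf)
  qed
  show ?thesis
  proof (intro exI conjI allI impI)
    show "0 < (\<chi> k. exp (- s k)) $ j" for j by simp
    fix c :: "real^'n" assume "(\<forall>j. 0 < c $ j) \<and> log_barrier x c \<le> r"
    then have "exp (- s k) \<le> c $ k \<and> c $ k \<le> 2 * (s k + ln (2 / x $ k) - 1) / x $ k" for k
      using ln_term_sublevel_bounds[OF _ _ term_le] x by blast
    then show "c \<in> cbox (\<chi> k. exp (- s k)) (\<chi> k. 2 * (s k + ln (2 / x $ k) - 1) / x $ k)"
      by (simp add: mem_box_cart)
  qed
qed

lemma log_barrier_attains_min:
  fixes x :: "real^'n"
  assumes V: "closed V" and c1: "c1 \<in> V" "\<forall>j. 0 < c1 $ j" and x: "\<forall>j. 0 < x $ j"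
  shows "\<exists>c\<in>V. (\<forall>j. 0 < c $ j) \<and>
    (\<forall>c'\<in>V. (\<forall>j. 0 < c' $ j) \<longrightarrow> log_barrier x c \<le> log_barrier x c')"
proof -
  obtain lo up where lo: "\<forall>j. 0 < lo $ j" and sub: "\<And>c. \<forall>j. 0 < c $ j \<Longrightarrow>
      log_barrier x c \<le> log_barrier x c1 \<Longrightarrow> c \<in> cbox lo up"
    using log_barrier_sublevel_in_cbox[OF x, where r = "log_barrier x c1"] by blast
  let ?K = "V \<inter> cbox lo up"
  have pos: "\<forall>j. 0 < c $ j" if "c \<in> ?K" for c
    using that lo by (auto simp: mem_box_cart intro: less_le_trans)
  have "compact ?K" using V by (simp add: closed_Int_compact)
  moreover have "continuous_on ?K (log_barrier x)"
    unfolding log_barrier_def using pos by (intro continuous_intros) (metis less_irrefl)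
  moreover have "c1 \<in> ?K" using c1 sub by simp
  ultimately obtain c where c: "c \<in> ?K" and min: "\<forall>c'\<in>?K. log_barrier x c \<le> log_barrier x c'"
    using continuous_attains_inf[of ?K "log_barrier x"] by auto
  have "log_barrier x c \<le> log_barrier x c'" if "c' \<in> V" "\<forall>j. 0 < c' $ j" for c'
  proof (cases "log_barrier x c' \<le> log_barrier x c1")
    case True then show ?thesis using min sub[OF that(2)] that(1) by blast
  next
    case False
    moreover have "log_barrier x c \<le> log_barrier x c1" using min \<open>c1 \<in> ?K\<close> by blast
    ultimately show ?thesis by linarith
  qed
  then show ?thesis using c pos by blast
qed

lemma eventually_positive_along_line:
  fixes c d :: "real^'n"
  assumes "\<forall>j. 0 < c $ j"
  shows "\<forall>\<^sub>F t in at 0. \<forall>j. 0 < (c + t *\<^sub>R d) $ j"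
proof (rule eventually_all_finite)
  fix j
  have "((\<lambda>t. c $ j + t * d $ j) \<longlongrightarrow> c $ j + 0 * d $ j) (at 0)"
    by (intro tendsto_intros)
  then show "\<forall>\<^sub>F t in at 0. 0 < (c + t *\<^sub>R d) $ j"
    using assms by (auto dest: order_tendstoD(1))
qed

lemma log_barrier_min_stationary:
  fixes x :: "real^'n"
  assumes c: "\<forall>j. 0 < c $ j" and min: "\<forall>\<^sub>F t in at 0. log_barrier x c \<le> log_barrier x (c + t *\<^sub>R d)"
  shows "d \<bullet> (x - vec_recip c) = 0"
proof -
  let ?D = "\<Sum>j\<in>UNIV. d $ j * x $ j - d $ j / c $ j"
  have "((\<lambda>t. log_barrier x (c + t *\<^sub>R d)) has_real_derivative ?D) (at 0)"
    unfolding log_barrier_def using c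
    by (auto intro!: derivative_eq_intros simp: divide_inverse mult.commute)
  moreover have "\<forall>\<^sub>F t in at 0. log_barrier x (c + 0 *\<^sub>R d) \<le> log_barrier x (c + t *\<^sub>R d)"
    using min by simp
  ultimately have "(*) ?D = (\<lambda>h. 0)"
    unfolding has_field_derivative_def by (rule has_derivative_local_min)
  then have "?D = 0" by (metis mult.right_neutral)
  then show ?thesis
    by (simp add: inner_vec_def vec_recip_def algebra_simps sum_subtractf divide_inverse)
qed

lemma exists_row_space_recip_solution:
  fixes A :: "real^'n^'m"
  assumes bdd: "bounded (Kset A b)" and x: "x \<in> Kset A b" "\<forall>j. 0 < x $ j"
  shows "\<exists>w. (\<forall>j. 0 < w $ j) \<and> w \<in> span (rows A) \<and> A *v vec_recip w = b"
proof -
  let ?V = "span (rows A)"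
  obtain L1 where "\<forall>j. 0 < (transpose A *v L1) $ j"
    using exists_transpose_mult_positive[OF bdd x(1)] by blast
  moreover have "transpose A *v L1 \<in> ?V" by (simp add: span_rows_eq_range)
  ultimately obtain w where w: "w \<in> ?V" "\<forall>j. 0 < w $ j"
    and min: "\<forall>c\<in>?V. (\<forall>j. 0 < c $ j) \<longrightarrow> log_barrier x w \<le> log_barrier x c"
    using log_barrier_attains_min[OF closed_subspace[OF subspace_span] _ _ x(2)] by blast
  define e where "e = x - vec_recip w"
  have orth: "d \<bullet> e = 0" if d: "d \<in> ?V" for d
    unfolding e_def
  proof (rule log_barrier_min_stationary[OF w(2)])
    show "\<forall>\<^sub>F t in at 0. log_barrier x w \<le> log_barrier x (w + t *\<^sub>R d)"
      using eventually_positive_along_line[OF w(2), of d]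
      by eventually_elim (use min w(1) d in \<open>simp add: span_add span_scale\<close>)
  qed
  have "(A *v e) \<bullet> (A *v e) = (transpose A *v (A *v e)) \<bullet> e"
    by (rule inner_matrix_vector_mult)
  also have "\<dots> = 0" by (rule orth) (simp add: span_rows_eq_range)
  finally have "A *v e = 0" by simp
  then have "A *v vec_recip w = b"
    using x(1) by (simp add: e_def Kset_def matrix_vector_mult_diff_distrib)
  then show ?thesis using w by blast
qed

text \<open>\<open>1/w\<^sub>1 - 1/w\<^sub>2\<close> lies in the kernel and \<open>w\<^sub>1 - w\<^sub>2\<close> in the row space, yet their inner
  product is negative unless they vanish, by monotonicity of \<open>y \<mapsto> 1/y\<close>.\<close>
lemma row_space_recip_solution_unique:
  fixes A :: "real^'n^'m"
  assumes w1: "\<forall>j. 0 < w1 $ j" "w1 \<in> span (rows A)" "A *v vec_recip w1 = b"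
    and w2: "\<forall>j. 0 < w2 $ j" "w2 \<in> span (rows A)" "A *v vec_recip w2 = b"
  shows "w1 = w2"
proof -
  have "A *v (vec_recip w1 - vec_recip w2) = 0"
    using w1 w2 by (simp add: matrix_vector_mult_diff_distrib)
  moreover have "w1 - w2 \<in> span (rows A)" using w1 w2 by (simp add: span_diff)
  ultimately have "orthogonal (vec_recip w1 - vec_recip w2) (w1 - w2)"
    by (rule orthogonal_nullspace_rowspace)
  moreover have "(1 / w1 $ j - 1 / w2 $ j) * (w1 $ j - w2 $ j) = - ((w1 $ j - w2 $ j)\<^sup>2 / (w1 $ j * w2 $ j))" for j
  proof -
    have "w1 $ j \<noteq> 0" "w2 $ j \<noteq> 0" using w1(1) w2(1) by (metis less_irrefl)+
    then show ?thesis by (simp add: divide_simps power2_eq_square) algebra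
  qed
  ultimately have "(\<Sum>j\<in>UNIV. (w1 $ j - w2 $ j)\<^sup>2 / (w1 $ j * w2 $ j)) = 0"
    by (simp add: orthogonal_def inner_vec_def vec_recip_def sum_negf)
  moreover have "0 \<le> (w1 $ j - w2 $ j)\<^sup>2 / (w1 $ j * w2 $ j)" for j
    using w1(1) w2(1) by (simp add: less_imp_le)
  ultimately have "(w1 $ j - w2 $ j)\<^sup>2 / (w1 $ j * w2 $ j) = 0" for j
    by (simp add: sum_nonneg_eq_0_iff)
  moreover have "w1 $ j * w2 $ j \<noteq> 0" for j using w1(1) w2(1) by (metis less_irrefl mult_pos_pos)
  ultimately show ?thesis by (simp add: vec_eq_iff)
qed

section \<open>The dual function \<open>H\<^sub>n\<close>\<close>

lemma ln_le_divide_minus_ln: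
  fixes y w :: real
  assumes "0 < y" "0 < w"
  shows "1 - ln w \<le> y / w - ln y" and "y / w - ln y = 1 - ln w \<Longrightarrow> y = w"
proof -
  have "ln (y / w) = ln y - ln w" using assms by (simp add: ln_div)
  then show "1 - ln w \<le> y / w - ln y" using ln_le_minus_one[of "y / w"] assms by simp
  assume "y / w - ln y = 1 - ln w"
  then have "y / w = 1"
    using ln_eq_minus_one[of "y / w"] \<open>ln (y / w) = ln y - ln w\<close> assms by simp
  then show "y = w" using assms by simp
qed

lemma Hn_eq_sum:
  fixes A :: "real^'n^'m"
  assumes "A *v vec_recip w = b" and "\<forall>j. 0 < (transpose A *v L) $ j"
  shows "Hn A b L = ereal (\<Sum>j\<in>UNIV. (transpose A *v L) $ j / w $ j - ln ((transpose A *v L) $ j))"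
proof -
  have "L \<bullet> b = (transpose A *v L) \<bullet> vec_recip w"
    using assms(1) inner_matrix_vector_mult[of L A "vec_recip w"] by simp
  then show ?thesis
    using assms(2) by (simp add: Hn_def inner_vec_def vec_recip_def divide_inverse sum_subtractf)
qed

lemma Hn_minimal:
  fixes A :: "real^'n^'m"
  assumes w: "\<forall>j. 0 < w $ j" "A *v vec_recip w = b" and L0: "w = transpose A *v L0"
  shows "Hn A b L0 \<le> Hn A b L" and "Hn A b L \<le> Hn A b L0 \<Longrightarrow> transpose A *v L = w"
proof -
  let ?y = "transpose A *v L"
  let ?gap = "\<lambda>j. ?y $ j / w $ j - ln (?y $ j) - (1 - ln (w $ j))"
  have nz: "w $ j \<noteq> 0" for j using w(1) by (metis less_irrefl)
  have "\<forall>j. 0 < (transpose A *v L0) $ j" using w(1) L0 by simp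
  from Hn_eq_sum[OF w(2) this] have H0: "Hn A b L0 = ereal (\<Sum>j\<in>UNIV. 1 - ln (w $ j))"
    unfolding L0[symmetric] by (simp add: nz)
  have H: "Hn A b L = ereal ((\<Sum>j\<in>UNIV. 1 - ln (w $ j)) + sum ?gap UNIV)" if "\<forall>j. 0 < ?y $ j"
    using Hn_eq_sum[OF w(2) that] by (simp add: sum_subtractf)
  have gap: "0 \<le> ?gap j" if "\<forall>j. 0 < ?y $ j" for j
    using ln_le_divide_minus_ln(1) that w(1) by (simp add: algebra_simps)
  show "Hn A b L0 \<le> Hn A b L"
  proof (cases "\<forall>j. 0 < ?y $ j")
    case True
    then have "0 \<le> sum ?gap UNIV" using gap by (simp add: sum_nonneg)
    then show ?thesis using H[OF True] H0 by simp
  qed (auto simp: Hn_def)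
  assume le: "Hn A b L \<le> Hn A b L0"
  then have pos: "\<forall>j. 0 < ?y $ j" using H0 by (auto simp: Hn_def split: if_splits)
  then have "sum ?gap UNIV \<le> 0" using le H0 H[OF pos] by simp
  then have "sum ?gap UNIV = 0" using gap[OF pos] by (simp add: antisym sum_nonneg)
  then have "?gap j = 0" for j
    using gap[OF pos] by (simp add: sum_nonneg_eq_0_iff)
  then show "?y = w"
    using ln_le_divide_minus_ln(2) pos w(1) by (simp add: vec_eq_iff)
qed

lemma Hn_unique_minimiser:
  fixes A :: "real^'n^'m"
  assumes w: "\<forall>j. 0 < w $ j" "w \<in> span (rows A)" "A *v vec_recip w = b"
    and inj: "inj ((*v) (transpose A))"
  shows "\<exists>\<Lambda>0. (\<forall>\<Lambda>. Hn A b \<Lambda>0 \<le> Hn A b \<Lambda>) \<and>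
    (\<forall>\<Lambda>'. (\<forall>\<Lambda>. Hn A b \<Lambda>' \<le> Hn A b \<Lambda>) \<longrightarrow> \<Lambda>' = \<Lambda>0) \<and> w = transpose A *v \<Lambda>0"
proof -
  obtain \<Lambda>0 where \<Lambda>0: "w = transpose A *v \<Lambda>0" using w(2) by (auto simp: span_rows_eq_range)
  have "\<Lambda>' = \<Lambda>0" if "\<forall>\<Lambda>. Hn A b \<Lambda>' \<le> Hn A b \<Lambda>" for \<Lambda>'
    using injD[OF inj] Hn_minimal(2)[OF w(1,3) \<Lambda>0, of \<Lambda>'] that \<Lambda>0 by metis
  then show ?thesis using Hn_minimal(1)[OF w(1,3) \<Lambda>0] \<Lambda>0 by blast
qed

lemma convex_on_Hn:
  fixes A :: "real^'n^'m"
  defines "D \<equiv> {L. \<forall>j. 0 < (transpose A *v L) $ j}"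
  shows "convex D" and "convex_on D (\<lambda>L. real_of_ereal (Hn A b L))"
proof -
  have D: "D = (*v) (transpose A) -` {x. \<forall>j. 0 < x $ j}" by (auto simp: D_def)
  show cvx: "convex D"
    unfolding D by (rule convex_linear_vimage[OF matrix_vector_mul_linear convex_positive_orthant])
  show "convex_on D (\<lambda>L. real_of_ereal (Hn A b L))"
  proof (rule convex_onI[OF _ cvx])
    fix t :: real and x y assume t: "0 < t" "t < 1" and xy: "x \<in> D" "y \<in> D"
    let ?z = "(1 - t) *\<^sub>R x + t *\<^sub>R y"
    have "?z \<in> D" using cvx xy t by (simp add: convex_def)
    have "(1 - t) * ln ((transpose A *v x) $ j) + t * ln ((transpose A *v y) $ j)
        \<le> ln ((transpose A *v ?z) $ j)" for j
      using concave_onD[OF ln_concave, of t "(transpose A *v x) $ j" "(transpose A *v y) $ j"] t xy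
      by (simp add: D_def matrix_vector_right_distrib matrix_vector_mult_scaleR)
    then have "(1 - t) * (\<Sum>j\<in>UNIV. ln ((transpose A *v x) $ j)) + t * (\<Sum>j\<in>UNIV. ln ((transpose A *v y) $ j))
        \<le> (\<Sum>j\<in>UNIV. ln ((transpose A *v ?z) $ j))"
      by (simp add: sum_distrib_left sum.distrib[symmetric] sum_mono)
    moreover have "?z \<bullet> b = (1 - t) * (x \<bullet> b) + t * (y \<bullet> b)"
      by (simp add: inner_add_left)
    moreover have val: "real_of_ereal (Hn A b L) = - (\<Sum>j\<in>UNIV. ln ((transpose A *v L) $ j)) + L \<bullet> b"
      if "L \<in> D" for L
      using that by (simp add: D_def Hn_def)
    ultimately show "real_of_ereal (Hn A b ?z) \<le> (1 - t) * real_of_ereal (Hn A b x) + t * real_of_ereal (Hn A b y)"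
      unfolding val[OF \<open>?z \<in> D\<close>] val[OF xy(1)] val[OF xy(2)] by argo
  qed
qed

section \<open>Laplace transform of the orthant\<close>

lemma nn_integral_lborel_vec_prod:
  fixes g :: "'n::finite \<Rightarrow> real \<Rightarrow> ennreal"
  assumes [measurable]: "\<And>j. g j \<in> borel_measurable borel"
  shows "(\<integral>\<^sup>+x. (\<Prod>j\<in>UNIV. g j (x $ j)) \<partial>(lborel :: (real^'n) measure)) = (\<Prod>j\<in>UNIV. \<integral>\<^sup>+t. g j t \<partial>lborel)"
proof -
  define f where "f b = g (SOME j. b = axis j (1::real))" for b :: "real^'n"
  have inj: "inj (\<lambda>j::'n. axis j (1::real))" by (auto simp: inj_on_def axis_eq_axis)
  have f_axis: "f (axis j 1) = g j" for j
    unfolding f_def by (rule arg_cong[where f=g]) (metis (mono_tags, lifting) inj injD someI_ex)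
  have "(\<integral>\<^sup>+x. (\<Prod>b\<in>Basis. f b (x \<bullet> b)) \<partial>(lborel :: (real^'n) measure)) = (\<Prod>b\<in>Basis. \<integral>\<^sup>+t. f b t \<partial>lborel)"
    by (rule nn_integral_lborel_prod) (auto simp: Basis_real_vec f_axis)
  then show ?thesis
    by (simp add: Basis_real_vec prod.reindex[OF inj] f_axis inner_axis)
qed

lemma has_bochner_integral_lborel_vec_prod:
  fixes g :: "'n::finite \<Rightarrow> real \<Rightarrow> real"
  assumes [measurable]: "\<And>j. g j \<in> borel_measurable borel"
    and nonneg: "\<And>j t. 0 \<le> g j t" and "\<And>j. 0 \<le> a j"
    and integral: "\<And>j. (\<integral>\<^sup>+t. ennreal (g j t) \<partial>lborel) = ennreal (a j)"
  shows "has_bochner_integral (lborel :: (real^'n) measure) (\<lambda>x. \<Prod>j\<in>UNIV. g j (x $ j)) (\<Prod>j\<in>UNIV. a j)"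
proof (rule has_bochner_integral_nn_integral)
  have "(\<integral>\<^sup>+x. ennreal (\<Prod>j\<in>UNIV. g j (x $ j)) \<partial>(lborel :: (real^'n) measure))
      = (\<integral>\<^sup>+x. (\<Prod>j\<in>UNIV. ennreal (g j (x $ j))) \<partial>lborel)"
    by (simp add: prod_ennreal nonneg)
  also have "\<dots> = (\<Prod>j\<in>UNIV. \<integral>\<^sup>+t. ennreal (g j t) \<partial>lborel)"
    by (rule nn_integral_lborel_vec_prod) measurable
  also have "\<dots> = ennreal (\<Prod>j\<in>UNIV. a j)"
    by (simp add: integral prod_ennreal assms(3))
  finally show "(\<integral>\<^sup>+x. ennreal (\<Prod>j\<in>UNIV. g j (x $ j)) \<partial>(lborel :: (real^'n) measure)) = ennreal (\<Prod>j\<in>UNIV. a j)" .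
qed (auto simp: nonneg assms(3) prod_nonneg)

lemma emeasure_lborel_atLeast: "emeasure lborel {a::real..} = \<infinity>"
proof (cases "emeasure lborel {a::real..}" rule: ennreal_cases)
  case (real r)
  have "emeasure lborel {a..a + (r + 1)} \<le> emeasure lborel {a::real..}"
    by (rule emeasure_mono) auto
  then show ?thesis using real by (simp add: ennreal_le_iff)
qed simp

lemma nn_integral_exp_halfline:
  fixes c :: real
  shows "(\<integral>\<^sup>+t. ennreal (indicator {0..} t * exp (- (c * t))) \<partial>lborel) = (if 0 < c then ennreal (1 / c) else \<infinity>)"
proof (cases "0 < c")
  case True
  have "(\<integral>\<^sup>+t. ennreal (indicator {0..} t * exp (- (c * t))) \<partial>lborel)
      = (\<integral>\<^sup>+t. ennreal (1 / c) * ennreal (erlang_density 0 c t) \<partial>lborel)"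
    using True by (intro nn_integral_cong)
      (auto simp: erlang_density_def ennreal_mult'[symmetric] split: split_indicator)
  also have "\<dots> = ennreal (1 / c)"
    using nn_integral_erlang_ith_moment[OF True, of 0 0] by (simp add: nn_integral_cmult)
  finally show ?thesis using True by simp
next
  case False
  have "indicator {0..} t \<le> ennreal (indicator {0..} t * exp (- (c * t)))" for t
    using False by (auto simp: indicator_def mult_nonpos_nonneg)
  then have "(\<integral>\<^sup>+t. indicator {0::real..} t \<partial>lborel) \<le> (\<integral>\<^sup>+t. ennreal (indicator {0..} t * exp (- (c * t))) \<partial>lborel)"
    by (rule nn_integral_mono)
  then show ?thesis using False by (simp add: emeasure_lborel_atLeast top_unique)
qed

lemma nn_integral_orthant_exp_inner:
  fixes c :: "real^'n"
  shows "(\<integral>\<^sup>+x. indicator orthant x * ennreal (exp (- (c \<bullet> x))) \<partial>lborel) =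
    (if \<forall>j. 0 < c $ j then ennreal (\<Prod>j\<in>UNIV. 1 / c $ j) else \<infinity>)"
proof -
  have "indicator orthant x * ennreal (exp (- (c \<bullet> x))) =
      (\<Prod>j\<in>UNIV. ennreal (indicator {0..} (x $ j) * exp (- (c $ j * x $ j))))" for x :: "real^'n"
  proof -
    have "(\<Prod>j\<in>UNIV. indicator {0..} (x $ j) :: real) = indicator orthant x"
      by (simp add: orthant_def indicator_def prod.neutral_const prod_zero_iff)
    moreover have "(\<Prod>j\<in>UNIV. exp (- (c $ j * x $ j))) = exp (- (c \<bullet> x))"
      by (simp add: exp_sum[symmetric] sum_negf inner_vec_def)
    ultimately show ?thesis
      by (simp add: prod_ennreal prod.distrib indicator_def)
  qed
  then have "(\<integral>\<^sup>+x. indicator orthant x * ennreal (exp (- (c \<bullet> x))) \<partial>lborel)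
      = (\<integral>\<^sup>+x. (\<Prod>j\<in>UNIV. ennreal (indicator {0..} (x $ j) * exp (- (c $ j * x $ j)))) \<partial>lborel)"
    by simp
  also have "\<dots> = (\<Prod>j\<in>UNIV. \<integral>\<^sup>+t. ennreal (indicator {0..} t * exp (- (c $ j * t))) \<partial>lborel)"
    by (rule nn_integral_lborel_vec_prod) measurable
  also have "\<dots> = (\<Prod>j\<in>UNIV. if 0 < c $ j then ennreal (1 / c $ j) else \<infinity>)"
    by (simp add: nn_integral_exp_halfline)
  also have "\<dots> = (if \<forall>j. 0 < c $ j then ennreal (\<Prod>j\<in>UNIV. 1 / c $ j) else \<infinity>)"
    by (auto simp: prod_ennreal less_imp_le ennreal_prod_eq_top)
  finally show ?thesis .
qed

section \<open>Maximum entropy\<close>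

lemma exp_density_eq_prod_erlang:
  assumes "\<forall>j. 0 < w $ j"
  shows "exp_density w x = (\<Prod>j\<in>UNIV. erlang_density 0 (w $ j) (x $ j))"
proof (cases "x \<in> orthant")
  case True
  then have "(\<Prod>j\<in>UNIV. erlang_density 0 (w $ j) (x $ j)) = (\<Prod>j\<in>UNIV. w $ j * exp (- (w $ j * x $ j)))"
    by (intro prod.cong) (auto simp: erlang_density_def orthant_def not_less[symmetric])
  also have "\<dots> = (\<Prod>j\<in>UNIV. w $ j) * exp (- (\<Sum>j\<in>UNIV. w $ j * x $ j))"
    by (simp add: prod.distrib exp_sum[symmetric] sum_negf)
  finally show ?thesis using True by (simp add: exp_density_def)
next
  case False
  then obtain j where "x $ j < 0" by (auto simp: orthant_def not_le)
  then have "erlang_density 0 (w $ j) (x $ j) = 0" by (simp add: erlang_density_def)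
  then show ?thesis using False by (simp add: exp_density_def prod_zero_iff) blast
qed

lemma exp_density_nonneg: "\<forall>j. 0 < w $ j \<Longrightarrow> 0 \<le> exp_density w x"
  by (simp add: exp_density_def prod_nonneg less_imp_le)

lemma exp_density_on_orthant:
  assumes "\<forall>j. 0 < w $ j" and "x \<in> orthant"
  shows "exp_density w x = exp ((\<Sum>j\<in>UNIV. ln (w $ j)) - w \<bullet> x)"
  using assms by (simp add: exp_density_def exp_diff exp_sum exp_minus divide_inverse inner_vec_def)

lemma exp_density_moments:
  assumes w: "\<forall>j. 0 < w $ j"
  shows "has_bochner_integral lborel (exp_density w) 1"
    and "has_bochner_integral lborel (\<lambda>x. exp_density w x * x $ k) (vec_recip w $ k)"
proof -
  have erlang: "(\<integral>\<^sup>+t. ennreal (erlang_density 0 (w $ j) t * t ^ i) \<partial>lborel) = ennreal (1 / w $ j ^ i)"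
    if "i \<le> 1" for i j
    using nn_integral_erlang_ith_moment[of "w $ j" 0 i] w that by (auto simp: le_Suc_eq divide_ennreal)
  define g where "g i j t = erlang_density 0 (w $ j) t * (if j = k then t ^ i else 1)" for i j t
  define a where "a i j = (if j = k then 1 / w $ j ^ i else 1)" for i j
  have "has_bochner_integral lborel (\<lambda>x. \<Prod>j\<in>UNIV. g i j (x $ j)) (\<Prod>j\<in>UNIV. a i j)"
    if "i \<le> 1" for i
  proof (rule has_bochner_integral_lborel_vec_prod)
    show "g i j \<in> borel_measurable borel" for j unfolding g_def by measurable
    have "0 \<le> w $ j" for j using w less_imp_le by blast
    then show "0 \<le> g i j t" for j t
      by (auto simp: g_def erlang_density_def intro!: mult_nonneg_nonneg)
    show "0 \<le> a i j" for j using w by (simp add: a_def less_imp_le)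
    show "(\<integral>\<^sup>+t. ennreal (g i j t) \<partial>lborel) = ennreal (a i j)" for j
      using erlang[OF that] nn_integral_erlang_ith_moment[of "w $ j" 0 0] w by (simp add: g_def a_def)
  qed
  moreover have "(\<Prod>j\<in>UNIV. g i j (x $ j)) = exp_density w x * x $ k ^ i" for i x
    by (simp add: g_def exp_density_eq_prod_erlang[OF w] prod.distrib prod.delta)
  moreover have "(\<Prod>j\<in>UNIV. a i j) = 1 / w $ k ^ i" for i
    by (simp add: a_def prod.delta)
  ultimately have "has_bochner_integral lborel (\<lambda>x. exp_density w x * x $ k ^ i) (1 / w $ k ^ i)"
    if "i \<le> 1" for i
    using that by simp
  from this[of 0] this[of 1] show "has_bochner_integral lborel (exp_density w) 1"
    and "has_bochner_integral lborel (\<lambda>x. exp_density w x * x $ k) (vec_recip w $ k)"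
    by (simp_all add: vec_recip_def)
qed

lemma exp_density_mult_ln:
  assumes "\<forall>j. 0 < w $ j"
  shows "exp_density w x * ln (exp_density w x) =
    (\<Sum>j\<in>UNIV. ln (w $ j)) * exp_density w x - (\<Sum>j\<in>UNIV. w $ j * (exp_density w x * x $ j))"
proof (cases "x \<in> orthant")
  case True
  show ?thesis
    by (simp only: exp_density_on_orthant[OF assms True] ln_exp)
      (simp add: algebra_simps sum_distrib_left sum_distrib_right inner_vec_def)
qed (simp add: exp_density_def)

lemma has_bochner_integral_linear_moments:
  fixes f :: "real^'n \<Rightarrow> real"
  assumes "has_bochner_integral lborel f 1"
    and "\<And>j. has_bochner_integral lborel (\<lambda>x. f x * x $ j) (\<mu> $ j)"
  shows "has_bochner_integral lborel (\<lambda>x. s * f x - (\<Sum>j\<in>UNIV. w $ j * (f x * x $ j))) (s - w \<bullet> \<mu>)"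
  using has_bochner_integral_diff[OF has_bochner_integral_mult_right[OF assms(1)]
      has_bochner_integral_sum[OF has_bochner_integral_mult_right[OF assms(2)]]]
  by (simp add: inner_vec_def)

lemma ln_gibbs_pointwise:
  fixes y q :: real
  assumes "0 \<le> y"
  shows "y * q + y - exp q \<le> y * ln y"
proof (cases "y = 0")
  case False
  then have y: "0 < y" using assms by simp
  have "ln (exp q / y) \<le> exp q / y - 1" using y by (intro ln_le_minus_one) simp
  then have "y * (q - ln y) \<le> y * (exp q / y - 1)" using y by (simp add: ln_div)
  then show ?thesis using y by (simp add: algebra_simps)
qed simp

lemma exp_density_orthant_prob_density:
  assumes w: "\<forall>j. 0 < w $ j"
  shows "orthant_prob_density (exp_density w)" and "mean_exists (exp_density w)"
    and "mean_vec (exp_density w) = vec_recip w"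
  using exp_density_moments[OF w] exp_density_nonneg[OF w]
  by (auto simp: orthant_prob_density_def mean_exists_def mean_vec_def vec_eq_iff
      has_bochner_integral_iff exp_density_def)

lemma dens_entropy_exp_density:
  fixes w :: "real^'n"
  assumes w: "\<forall>j. 0 < w $ j"
  shows "dens_entropy (exp_density w) = ereal (real CARD('n) - (\<Sum>j\<in>UNIV. ln (w $ j)))"
proof -
  have "has_bochner_integral lborel (\<lambda>x. exp_density w x * ln (exp_density w x))
      ((\<Sum>j\<in>UNIV. ln (w $ j)) - w \<bullet> vec_recip w)"
    using has_bochner_integral_linear_moments[OF exp_density_moments[OF w]]
    by (simp add: exp_density_mult_ln[OF w])
  then show ?thesis
    using inner_vec_recip[OF w] by (simp add: dens_entropy_def has_bochner_integral_iff)
qed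

lemma dens_entropy_le_cross_entropy:
  assumes w: "\<forall>j. 0 < w $ j" and f: "orthant_prob_density f" "mean_exists f"
  shows "dens_entropy f \<le> ereal (w \<bullet> mean_vec f - (\<Sum>j\<in>UNIV. ln (w $ j)))"
proof (cases "integrable lborel (\<lambda>x. f x * ln (f x))")
  case True
  let ?p = "exp_density w" and ?S = "\<Sum>j\<in>UNIV. ln (w $ j)"
  have f0: "has_bochner_integral lborel f 1"
    using f(1) by (simp add: orthant_prob_density_def has_bochner_integral_iff)
  have f1: "has_bochner_integral lborel (\<lambda>x. f x * x $ j) (mean_vec f $ j)" for j
    using f(2) by (simp add: mean_exists_def mean_vec_def has_bochner_integral_iff)
  have lower: "has_bochner_integral lborel
      (\<lambda>x. (?S * f x - (\<Sum>j\<in>UNIV. w $ j * (f x * x $ j))) + f x - ?p x) (?S - w \<bullet> mean_vec f + 1 - 1)"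
    by (intro has_bochner_integral_diff has_bochner_integral_add
        has_bochner_integral_linear_moments f0 f1 exp_density_moments(1)[OF w])
  have "AE x in lborel. 0 \<le> f x" "AE x in lborel. x \<notin> orthant \<longrightarrow> f x = 0"
    using f(1) by (auto simp: orthant_prob_density_def)
  then have "AE x in lborel. (?S * f x - (\<Sum>j\<in>UNIV. w $ j * (f x * x $ j))) + f x - ?p x \<le> f x * ln (f x)"
  proof eventually_elim
    case (elim x)
    show ?case
    proof (cases "x \<in> orthant")
      case True
      have "f x * (?S - w \<bullet> x) + f x - exp (?S - w \<bullet> x) \<le> f x * ln (f x)"
        by (rule ln_gibbs_pointwise) (use elim in simp)
      then show ?thesis
        using exp_density_on_orthant[OF w True]
        by (simp add: algebra_simps sum_distrib_left inner_vec_def)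
    qed (use elim in \<open>simp add: exp_density_def\<close>)
  qed
  then have "?S - w \<bullet> mean_vec f \<le> integral\<^sup>L lborel (\<lambda>x. f x * ln (f x))"
    using integral_mono_AE[OF _ True] lower by (force simp: has_bochner_integral_iff)
  then show ?thesis using True by (simp add: dens_entropy_def)
qed (simp add: dens_entropy_def)

lemma exp_density_mean_in_Kset:
  assumes "\<forall>j. 0 < w $ j" and "A *v vec_recip w = b"
  shows "mean_vec (exp_density w) \<in> Kset A b"
  using assms exp_density_orthant_prob_density(3)[OF assms(1)]
  by (simp add: Kset_def vec_recip_def less_imp_le)

lemma exp_density_max_entropy:
  fixes A :: "real^'n^'m"
  assumes w: "\<forall>j. 0 < w $ j" "w \<in> span (rows A)" "A *v vec_recip w = b"
    and f: "orthant_prob_density f" "mean_exists f" "mean_vec f \<in> Kset A b"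
  shows "dens_entropy f \<le> dens_entropy (exp_density w)"
proof -
  have "A *v (mean_vec f - vec_recip w) = 0"
    using f(3) w(3) by (simp add: Kset_def matrix_vector_mult_diff_distrib)
  then have "orthogonal (mean_vec f - vec_recip w) w"
    using w(2) by (rule orthogonal_nullspace_rowspace)
  then have "w \<bullet> mean_vec f = real CARD('n)"
    using inner_vec_recip[OF w(1)] by (simp add: orthogonal_def inner_diff_right inner_commute)
  then show ?thesis
    using dens_entropy_le_cross_entropy[OF w(1) f(1,2)] by (simp add: dens_entropy_exp_density[OF w(1)])
qed

theorem proposition6p1:
  fixes A :: "real^'n^'m" and b :: "real^'m"
  assumes dims: "CARD('n) > CARD('m)"
    and rankA: "rank A = CARD('m)"
    and Kcpt: "compact (Kset A b)"
    and Kpos: "\<exists>x\<in>Kset A b. \<forall>j. 0 < x $ j"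
  shows "(\<exists>!w :: real^'n. (\<forall>j. 0 < w $ j) \<and> w \<in> span (rows A) \<and>
            (\<forall>l. (\<Sum>j\<in>UNIV. A $ l $ j / w $ j) = b $ l)) \<and>
         (\<forall>w :: real^'n. (\<forall>j. 0 < w $ j) \<and> w \<in> span (rows A) \<and>
            (\<forall>l. (\<Sum>j\<in>UNIV. A $ l $ j / w $ j) = b $ l) \<longrightarrow>
          (orthant_prob_density (exp_density w) \<and> mean_exists (exp_density w) \<and>
             mean_vec (exp_density w) \<in> Kset A b \<and>
           (\<forall>f. orthant_prob_density f \<and> mean_exists f \<and> mean_vec f \<in> Kset A b \<longrightarrow>
              dens_entropy f \<le> dens_entropy (exp_density w))) \<and>
          (\<exists>\<Lambda>0. (\<forall>\<Lambda>. Hn A b \<Lambda>0 \<le> Hn A b \<Lambda>) \<and>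
                 (\<forall>\<Lambda>'. (\<forall>\<Lambda>. Hn A b \<Lambda>' \<le> Hn A b \<Lambda>) \<longrightarrow> \<Lambda>' = \<Lambda>0) \<and>
                 w = transpose A *v \<Lambda>0)) \<and>
         (\<forall>\<Lambda> :: real^'m.
           (\<integral>\<^sup>+ x. indicator orthant x * ennreal (exp (- (\<Lambda> \<bullet> (A *v x)))) \<partial>lborel) =
           (if \<forall>j. 0 < (transpose A *v \<Lambda>) $ j
            then ennreal (\<Prod>j\<in>UNIV. 1 / (transpose A *v \<Lambda>) $ j) else \<infinity>)) \<and>
         (convex {\<Lambda> :: real^'m. \<forall>j. 0 < (transpose A *v \<Lambda>) $ j} \<and>
         convex_on {\<Lambda>. \<forall>j. 0 < (transpose A *v \<Lambda>) $ j} (\<lambda>\<Lambda>. real_of_ereal (Hn A b \<Lambda>)))"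
proof -
  have inj: "inj ((*v) (transpose A))"
    using rankA by (simp add: full_rank_injective[symmetric] rank_transpose)
  obtain x where x: "x \<in> Kset A b" "\<forall>j. 0 < x $ j" using Kpos by blast
  have "\<exists>!w. (\<forall>j. 0 < w $ j) \<and> w \<in> span (rows A) \<and> A *v vec_recip w = b"
    using exists_row_space_recip_solution[OF compact_imp_bounded[OF Kcpt] x]
      row_space_recip_solution_unique by blast
  moreover have "(\<integral>\<^sup>+ x. indicator orthant x * ennreal (exp (- (\<Lambda> \<bullet> (A *v x)))) \<partial>lborel) =
      (if \<forall>j. 0 < (transpose A *v \<Lambda>) $ j
       then ennreal (\<Prod>j\<in>UNIV. 1 / (transpose A *v \<Lambda>) $ j) else \<infinity>)" for \<Lambda>
    by (simp only: inner_matrix_vector_mult nn_integral_orthant_exp_inner)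
  moreover have "(orthant_prob_density (exp_density w) \<and> mean_exists (exp_density w) \<and>
        mean_vec (exp_density w) \<in> Kset A b \<and>
        (\<forall>f. orthant_prob_density f \<and> mean_exists f \<and> mean_vec f \<in> Kset A b \<longrightarrow>
          dens_entropy f \<le> dens_entropy (exp_density w)))"
    if "\<forall>j. 0 < w $ j" "w \<in> span (rows A)" "A *v vec_recip w = b" for w
    using that exp_density_orthant_prob_density exp_density_mean_in_Kset exp_density_max_entropy
    by blast
  ultimately show ?thesis
    unfolding sum_divide_eq_iff_vec_recip
    using Hn_unique_minimiser[OF _ _ _ inj] convex_on_Hn(1)[of A] convex_on_Hn(2)[of A b]
    by blast
qed

end
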